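(* Let $n\ge 4$ and let $D_n$ be the tree on vertex set $\{1,2,\ldots,n\}$ whose edges are $\{1,3\}$, $\{2,3\}$ and $\{i,i+1\}$ for $3\le i\le n-1$. Let $A$ be its adjacency matrix, $e$ the all-ones vector of length $n$, $W(D_n)=[e,Ae,\ldots,A^{n-1}e]$, and let $\hat W(D_n)$ be the $(n-1)\times(n-1)$ matrix obtained from $W(D_n)$ by deleting the first row and the last column. Then: (i) if $4\nmid n$, then $\det \hat W(D_n)=\pm 2^{\lfloor n/2\rfloor-1}$; (ii) if $4\mid n$, then $\operatorname{rank}\hat W(D_n)=n-2$.
   Context: $D_n$ is the Dynkin graph: the path of order $n-1$ with a pendant edge added at its second vertex (here the path is $1,3,4,\ldots,n$ and vertex $2$ is the pendant vertex attached to vertex $3$). *)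

theory Defs
  imports "Jordan_Normal_Form.Determinant" "Jordan_Normal_Form.DL_Rank"
begin

definition Dn_edge :: "nat \<Rightarrow> nat \<Rightarrow> nat \<Rightarrow> bool" where
  "Dn_edge n u v \<longleftrightarrow>
     {u, v} = {1, 3} \<or> {u, v} = {2, 3} \<or>
     (\<exists>i. 3 \<le> i \<and> i \<le> n - 1 \<and> {u, v} = {i, i + 1})"

text \<open>Adjacency matrix (0-based indices: row/column k corresponds to vertex k+1).\<close>
definition Dn_adj :: "nat \<Rightarrow> real mat" where
  "Dn_adj n = mat n n (\<lambda>(i, j). if Dn_edge n (i + 1) (j + 1) then 1 else 0)"

definition walk_mat :: "nat \<Rightarrow> real mat" where
  "walk_mat n = mat n n (\<lambda>(i, j). ((Dn_adj n ^\<^sub>m j) *\<^sub>v (vec n (\<lambda>_. 1))) $ i)"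

definition walk_mat_hat :: "nat \<Rightarrow> real mat" where
  "walk_mat_hat n = mat (n - 1) (n - 1) (\<lambda>(i, j). walk_mat n $$ (i + 1, j))"

end

theory Submission
  imports Defs
begin

text \<open>Rows 1 and 2 of \<open>W(D\<^sub>n)\<close> agree, since the two pendant vertices 1 and 2 are exchanged by
  an automorphism of \<open>D\<^sub>n\<close>. Hence \<open>walk_mat_hat n\<close> is the Krylov matrix \<open>[e, Be, \<dots>, B\<^sup>m\<^sup>-\<^sup>1e]\<close>,
  \<open>m = n - 1\<close>, of the weighted path operator \<open>B\<close> obtained by folding vertex 1 onto vertex 2.
  Unitriangular column operations replace \<open>B\<^sup>je\<close> by \<open>p\<^sub>j(B)e\<close> for Chebyshev-type polynomials
  \<open>p\<^sub>j\<close>, pair the columns \<open>j\<close> and \<open>m + 1 - j\<close>, and clear column 1. The nonzero entries of the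
  resulting matrix are dominated by those at a permutation of pivot positions, so its determinant
  is, up to sign, the product of the pivots: 1, a residue \<open>\<gamma> \<in> {0, 1, -1}\<close> with \<open>\<gamma> = 0\<close> iff
  \<open>m mod 4 = 3\<close>, i.e. iff \<open>4 dvd n\<close>, then \<open>n div 2 - 1\<close> pivots \<open>-2\<close> and otherwise \<open>-1\<close>.
  When \<open>\<gamma> = 0\<close>, replacing it by 1 is a rank-one change making the matrix nonsingular, so the
  rank is \<open>n - 2\<close>.\<close>

section \<open>Unitriangular column operations and pivots\<close>

lemma index_mult_mat_sum:
  fixes A :: "'a :: comm_ring_1 mat"
  assumes "A \<in> carrier_mat m m" and "i < m" and "j < m"
  shows "(A * mat m m f) $$ (i, j) = (\<Sum>k<m. A $$ (i, k) * f (k, j))"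
  using assms by (auto simp: scalar_prod_def lessThan_atLeast0 intro!: sum.cong)

lemma pow_mat_Suc_left:
  fixes A :: "'a :: semiring_1 mat"
  assumes A: "A \<in> carrier_mat n n"
  shows "A ^\<^sub>m Suc k = A * A ^\<^sub>m k"
proof (induction k)
  case 0
  then show ?case using A by simp
next
  case (Suc k)
  have "A ^\<^sub>m Suc (Suc k) = (A * A ^\<^sub>m k) * A" using Suc by simp
  also have "\<dots> = A * (A ^\<^sub>m k * A)"
    using A by (simp add: assoc_mult_mat[of A n n "A ^\<^sub>m k" n A n])
  finally show ?case by simp
qed

lemma det_unitriangular:
  fixes C :: "nat \<Rightarrow> nat \<Rightarrow> 'a :: comm_ring_1"
  assumes diag: "\<And>k. C k k = 1"
    and tri: "(\<forall>k j. j < k \<longrightarrow> C k j = 0) \<or> (\<forall>k j. k < j \<longrightarrow> C k j = 0)"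
  shows "det (mat m m (\<lambda>(k, j). C k j)) = 1"
proof -
  let ?T = "mat m m (\<lambda>(k, j). C k j)"
  have "diag_mat ?T = replicate m 1"
    using diag by (auto simp: diag_mat_def map_replicate_trivial intro: nth_equalityI)
  then have "prod_list (diag_mat ?T) = 1" by simp
  from tri show ?thesis
  proof
    assume "\<forall>k j. j < k \<longrightarrow> C k j = 0"
    then have "upper_triangular ?T" by (auto simp: upper_triangular_def)
    with \<open>prod_list (diag_mat ?T) = 1\<close> show ?thesis using det_upper_triangular[of ?T m] by simp
  next
    assume "\<forall>k j. k < j \<longrightarrow> C k j = 0"
    with \<open>prod_list (diag_mat ?T) = 1\<close> show ?thesis using det_lower_triangular[of m ?T] by simp
  qed
qed

definition column_op_mat :: "nat \<Rightarrow> (nat \<Rightarrow> nat \<Rightarrow> 'a :: comm_ring_1) \<Rightarrow> 'a mat" where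
  "column_op_mat m C = mat m m (\<lambda>(k, j). (if k = j then 1 else 0) + C k j)"

lemma column_op_mat_carrier [simp]: "column_op_mat m C \<in> carrier_mat m m"
  and dim_column_op_mat [simp]: "dim_row (column_op_mat m C) = m" "dim_col (column_op_mat m C) = m"
  by (simp_all add: column_op_mat_def)

lemma det_column_op_mat:
  assumes "(\<forall>k j. j \<le> k \<longrightarrow> C k j = 0) \<or> (\<forall>k j. k \<le> j \<longrightarrow> C k j = 0)"
  shows "det (column_op_mat m C) = 1"
  unfolding column_op_mat_def using assms
  by (intro det_unitriangular[where C = "\<lambda>k j. (if k = j then 1 else 0) + C k j", simplified]) auto

lemma index_mult_column_op_mat:
  fixes A :: "'a :: comm_ring_1 mat"
  assumes A: "A \<in> carrier_mat m m" and i: "i < m" and j: "j < m"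
  shows "(A * column_op_mat m C) $$ (i, j) = A $$ (i, j) + (\<Sum>k<m. A $$ (i, k) * C k j)"
proof -
  have "(A * column_op_mat m C) $$ (i, j)
      = (\<Sum>k<m. A $$ (i, k) * (if k = j then 1 else 0)) + (\<Sum>k<m. A $$ (i, k) * C k j)"
    unfolding column_op_mat_def index_mult_mat_sum[OF A i j]
    by (simp add: distrib_left sum.distrib)
  also have "(\<Sum>k<m. A $$ (i, k) * (if k = j then 1 else 0)) = A $$ (i, j)"
    using j by (simp add: if_distrib sum.delta cong: if_cong)
  finally show ?thesis .
qed

lemma mult_column_op_mat_single:
  fixes A :: "'a :: comm_ring_1 mat"
  assumes A: "A \<in> carrier_mat m m"
  shows "A * column_op_mat m (\<lambda>k j. if k = f j \<and> P j then c else 0)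
    = mat m m (\<lambda>(i, j). A $$ (i, j) + (if P j \<and> f j < m then c * A $$ (i, f j) else 0))"
    (is "_ = ?B")
proof (rule eq_matI)
  fix i j assume "i < dim_row ?B" and "j < dim_col ?B"
  then have i: "i < m" and j: "j < m" by auto
  have "(\<Sum>k<m. A $$ (i, k) * (if k = f j \<and> P j then c else 0))
      = (\<Sum>k<m. if k = f j then (if P j then c * A $$ (i, f j) else 0) else 0)"
    by (intro sum.cong) auto
  then show "(A * column_op_mat m (\<lambda>k j. if k = f j \<and> P j then c else 0)) $$ (i, j) = ?B $$ (i, j)"
    using i j by (simp add: index_mult_column_op_mat[OF A i j])
qed (use A in auto)

definition col_reduces_to :: "nat \<Rightarrow> 'a :: comm_ring_1 mat \<Rightarrow> 'a mat \<Rightarrow> bool" where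
  "col_reduces_to m A B \<longleftrightarrow> (\<exists>T \<in> carrier_mat m m. det T = 1 \<and> A * T = B)"

lemma col_reduces_to_det:
  assumes "A \<in> carrier_mat m m" and "col_reduces_to m A B"
  shows "det B = det A"
proof -
  obtain T where T: "T \<in> carrier_mat m m" "det T = 1" "A * T = B"
    using assms(2) unfolding col_reduces_to_def by blast
  then show ?thesis using det_mult[OF assms(1) T(1)] by simp
qed

lemma col_reduces_to_trans:
  assumes A: "A \<in> carrier_mat m m" and "col_reduces_to m A B" and "col_reduces_to m B C"
  shows "col_reduces_to m A C"
proof -
  obtain S T where S: "S \<in> carrier_mat m m" "det S = 1" "A * S = B"
    and T: "T \<in> carrier_mat m m" "det T = 1" "B * T = C"
    using assms unfolding col_reduces_to_def by blast
  have "A * (S * T) = C"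
    using A S T by (simp add: assoc_mult_mat[of A m m S m T m, symmetric])
  moreover have "det (S * T) = 1"
    using S T by (simp add: det_mult)
  ultimately show ?thesis
    using S T unfolding col_reduces_to_def by (intro bexI[of _ "S * T"]) auto
qed

lemma col_reduces_to_column_op:
  assumes "(\<forall>k j. j \<le> k \<longrightarrow> C k j = 0) \<or> (\<forall>k j. k \<le> j \<longrightarrow> C k j = 0)"
  shows "col_reduces_to m A (A * column_op_mat m C)"
  unfolding col_reduces_to_def using det_column_op_mat[OF assms]
  by (intro bexI[of _ "column_op_mat m C"]) auto

lemma abs_det_eq_abs_prod_pivots:
  fixes A :: "'a :: linordered_idom mat" and pivot key :: "nat \<Rightarrow> nat"
  assumes A: "A \<in> carrier_mat m m"
    and pivot: "bij_betw pivot {..<m} {..<m}"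
    and dominated: "\<And>i j. i < m \<Longrightarrow> j < m \<Longrightarrow> A $$ (i, j) \<noteq> 0 \<Longrightarrow>
      i = pivot j \<or> key (pivot j) < key i"
  shows "\<bar>det A\<bar> = \<bar>\<Prod>j<m. A $$ (pivot j, j)\<bar>"
proof -
  define q where "q i = (if i < m then inv_into {..<m} pivot i else i)" for i
  have q_pivot: "q (pivot j) = j" if "j < m" for j
    using that pivot bij_betw_imp_surj_on bij_betw_inv_into_left by (fastforce simp: q_def)
  have q_permutes: "q permutes {0..<m}"
    using bij_betw_inv_into[OF pivot]
    by (intro bij_imp_permutes)
      (auto simp: q_def bij_betw_def inj_on_def lessThan_atLeast0[symmetric] image_def)
  have vanish: "(\<Prod>i = 0..<m. A $$ (i, p i)) = 0" if p: "p permutes {0..<m}" and "p \<noteq> q" for p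
  proof (rule ccontr)
    assume "(\<Prod>i = 0..<m. A $$ (i, p i)) \<noteq> 0"
    then have key_le: "i = pivot (p i) \<or> key (pivot (p i)) < key i" if "i < m" for i
      using dominated that p by (auto simp: permutes_in_image)
    have "bij_betw (pivot \<circ> p) {..<m} {..<m}"
      using bij_betw_trans[OF permutes_imp_bij[OF p] pivot[unfolded lessThan_atLeast0]]
      by (simp add: lessThan_atLeast0)
    then have key_sum: "(\<Sum>i<m. key (pivot (p i))) = (\<Sum>i<m. key i)"
      using sum.reindex_bij_betw[of "pivot \<circ> p" "{..<m}" "{..<m}" key] by simp
    \<comment> \<open>\<open>pivot \<circ> p\<close> never increases the key, decreases it off its fixed points, and preserves
      the key sum\<close>
    have fixed: "pivot (p i) = i" if "i < m" for i
    proof (rule ccontr)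
      assume "pivot (p i) \<noteq> i"
      then have "(\<Sum>i<m. key (pivot (p i))) < (\<Sum>i<m. key i)"
      proof (intro sum_strict_mono_ex1)
        show "\<forall>x\<in>{..<m}. key (pivot (p x)) \<le> key x" using key_le by force
        show "\<exists>a\<in>{..<m}. key (pivot (p a)) < key a" using key_le that \<open>pivot (p i) \<noteq> i\<close> by force
      qed simp
      with key_sum show False by simp
    qed
    have "p = q"
    proof
      fix i show "p i = q i"
        using fixed[of i] q_pivot[of "p i"] p
        by (cases "i < m") (auto simp: q_def permutes_def permutes_in_image)
    qed
    with \<open>p \<noteq> q\<close> show False ..
  qed
  have "det A = of_int (sign q) * (\<Prod>i = 0..<m. A $$ (i, q i))"
    unfolding det_def'[OF A]
    by (subst sum.remove[where x = q])
      (use q_permutes in \<open>auto simp: finite_permutations vanish intro!: sum.neutral\<close>)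
  moreover have "(\<Prod>i = 0..<m. A $$ (i, q i)) = (\<Prod>j<m. A $$ (pivot j, j))"
    using prod.reindex_bij_betw[OF pivot, of "\<lambda>i. A $$ (i, q i)"] q_pivot
    by (simp add: lessThan_atLeast0)
  ultimately show ?thesis by (simp add: abs_mult sign_def)
qed

lemma rank_eq_minus_one_if_rank_one_update:
  fixes A R :: "'a :: field mat"
  assumes A: "A \<in> carrier_mat m m" and R: "R \<in> carrier_mat m m"
    and "det A = 0" and "vec_space.rank m R \<le> 1" and "det (A + R) \<noteq> 0"
  shows "vec_space.rank m A = m - 1"
proof -
  have "vec_space.rank m (A + R) = m"
    using assms by (intro vec_space.low_rank_det_zero) auto
  moreover have "vec_space.rank m (A + R) \<le> vec_space.rank m A + vec_space.rank m R"
    by (rule vec_space.rank_subadditive[OF A R])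
  moreover have "vec_space.rank m A < m"
    using assms by (intro vec_space.det_zero_low_rank) auto
  ultimately show ?thesis using assms(4) by linarith
qed

lemma col_reduces_to_inverse:
  fixes A B :: "'a :: field mat"
  assumes A: "A \<in> carrier_mat m m" and "col_reduces_to m A B"
  obtains T' where "T' \<in> carrier_mat m m" "det T' \<noteq> 0" "A = B * T'"
proof -
  obtain T where T: "T \<in> carrier_mat m m" "det T = 1" "A * T = B"
    using assms(2) unfolding col_reduces_to_def by blast
  obtain T' where T': "T' \<in> carrier_mat m m" "T * T' = 1\<^sub>m m"
    using det_non_zero_imp_unit[OF T(1)] T(2) unfolding Units_def ring_mat_def by auto
  have "det T' \<noteq> 0"
    using det_mult[OF T(1) T'(1)] T(2) T'(2) by auto
  moreover have "A = B * T'"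
  proof -
    have "A = A * (T * T')" using A T'(2) by simp
    also have "\<dots> = (A * T) * T'" by (rule assoc_mult_mat[symmetric, OF A T(1) T'(1)])
    finally show ?thesis using T(3) by simp
  qed
  ultimately show ?thesis using that T'(1) by blast
qed

lemma rank_single_entry_mult_le_1:
  fixes T :: "'a :: field mat"
  assumes T: "T \<in> carrier_mat m m" and r: "r < m" and c: "c < m"
  shows "vec_space.rank m (mat m m (\<lambda>(i, j). if i = r \<and> j = c then 1 else 0) * T) \<le> 1"
    (is "vec_space.rank m (?E * T) \<le> 1")
proof (rule vec_space.rank_le_1_product_entries[where f = "\<lambda>i. if i = r then 1 else 0"
    and g = "\<lambda>j. T $$ (c, j)"])
  show "?E * T \<in> carrier_mat m m" by (rule mult_carrier_mat[OF mat_carrier T])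
  fix i j assume "i < dim_row (?E * T)" "j < dim_col (?E * T)"
  then have i: "i < m" and j: "j < m" using T by auto
  have "(?E * T) $$ (i, j) = (\<Sum>k\<in>{0..<m}. ?E $$ (i, k) * T $$ (k, j))"
    using i j T by (simp add: scalar_prod_def)
  also have "\<dots> = (\<Sum>k\<in>{0..<m}. if k = c then (if i = r then 1 else 0) * T $$ (c, j) else 0)"
    using i by (intro sum.cong) auto
  finally show "(?E * T) $$ (i, j) = (if i = r then 1 else 0) * T $$ (c, j)"
    using c by simp
qed

section \<open>Folding the walk vectors of \<open>D\<^sub>n\<close>\<close>

lemma Dn_edge_iff:
  "Dn_edge n u v \<longleftrightarrow> {u, v} = {1, 3} \<or> {u, v} = {2, 3}
     \<or> (3 \<le> u \<and> u \<le> n - 1 \<and> v = u + 1) \<or> (3 \<le> v \<and> v \<le> n - 1 \<and> u = v + 1)"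
  unfolding Dn_edge_def doubleton_eq_iff by auto

lemma Dn_neighbours:
  assumes "4 \<le> n" and "i < n"
  shows "{k \<in> {0..<n}. Dn_edge n (i + 1) (k + 1)} =
    (if i \<le> 1 then {2} else if i = 2 then {0, 1, 3} else {i - 1} \<union> (if i + 1 < n then {i + 1} else {}))"
  using assms unfolding Dn_edge_iff doubleton_eq_iff by auto

lemma index_mult_Dn_adj_vec:
  fixes v :: "real vec"
  assumes n: "4 \<le> n" and i: "i < n" and v: "v \<in> carrier_vec n"
  shows "(Dn_adj n *\<^sub>v v) $ i = (if i \<le> 1 then v $ 2 else if i = 2 then v $ 0 + v $ 1 + v $ 3
    else v $ (i - 1) + (if i + 1 < n then v $ (i + 1) else 0))"
proof -
  have "(Dn_adj n *\<^sub>v v) $ i = (\<Sum>k = 0..<n. if Dn_edge n (i + 1) (k + 1) then v $ k else 0)"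
    using i v by (auto simp: Dn_adj_def scalar_prod_def intro!: sum.cong)
  also have "\<dots> = (\<Sum>k \<in> {k \<in> {0..<n}. Dn_edge n (i + 1) (k + 1)}. v $ k)"
    by (rule sum.inter_filter[symmetric]) simp
  also have "\<dots> = (if i \<le> 1 then v $ 2 else if i = 2 then v $ 0 + v $ 1 + v $ 3
    else v $ (i - 1) + (if i + 1 < n then v $ (i + 1) else 0))"
    unfolding Dn_neighbours[OF n i] using i by auto
  finally show ?thesis .
qed

definition walk_vec :: "nat \<Rightarrow> nat \<Rightarrow> real vec" where
  "walk_vec n j = (Dn_adj n ^\<^sub>m j) *\<^sub>v vec n (\<lambda>_. 1)"

lemma Dn_adj_carrier: "Dn_adj n \<in> carrier_mat n n"
  by (simp add: Dn_adj_def)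

lemma walk_vec_carrier: "walk_vec n j \<in> carrier_vec n"
  unfolding walk_vec_def by (rule mult_mat_vec_carrier[OF pow_carrier_mat[OF Dn_adj_carrier]]) simp

lemma walk_vec_0: "walk_vec n 0 = vec n (\<lambda>_. 1)"
  using Dn_adj_carrier[of n] by (simp add: walk_vec_def)

lemma walk_vec_Suc: "walk_vec n (Suc j) = Dn_adj n *\<^sub>v walk_vec n j"
  unfolding walk_vec_def pow_mat_Suc_left[OF Dn_adj_carrier]
  using Dn_adj_carrier by (simp add: assoc_mult_mat_vec[of _ n n _ n])

lemma walk_vec_0_eq_1:
  assumes "4 \<le> n"
  shows "walk_vec n j $ 0 = walk_vec n j $ 1"
  using assms walk_vec_carrier by (cases j) (simp_all add: walk_vec_0 walk_vec_Suc index_mult_Dn_adj_vec)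

text \<open>Index \<open>t\<close> of the folded vectors stands for vertex \<open>t + 2\<close> of \<open>D\<^sub>n\<close>; vertex 3 counts the
  merged pendant vertex 2 twice.\<close>

definition fold_step :: "nat \<Rightarrow> (nat \<Rightarrow> real) \<Rightarrow> nat \<Rightarrow> real" where
  "fold_step m x t = (if t = 0 then 0 else if t = 1 then 2 * x 0 else x (t - 1))
    + (if t + 1 < m then x (t + 1) else 0)"

fun folded_walk :: "nat \<Rightarrow> nat \<Rightarrow> nat \<Rightarrow> real" where
  "folded_walk m 0 = (\<lambda>_. 1)"
| "folded_walk m (Suc j) = fold_step m (folded_walk m j)"

definition folded_walk_mat :: "nat \<Rightarrow> real mat" where
  "folded_walk_mat m = mat m m (\<lambda>(i, j). folded_walk m j i)"

lemma walk_vec_eq_folded_walk: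
  assumes n: "4 \<le> n" and t: "t < n - 1"
  shows "walk_vec n j $ (t + 1) = folded_walk (n - 1) j t"
  using t
proof (induction j arbitrary: t)
  case 0
  then show ?case by (simp add: walk_vec_0)
next
  case (Suc j)
  have "t = 0 \<or> t = 1 \<or> 2 \<le> t" by linarith
  then show ?case
    using Suc.prems n walk_vec_carrier walk_vec_0_eq_1[OF n, of j] Suc.IH[of 0] Suc.IH[of 1] Suc.IH[of 2]
      Suc.IH[of "t - 1"] Suc.IH[of "t + 1"]
    by (auto simp: walk_vec_Suc index_mult_Dn_adj_vec fold_step_def numeral_eq_Suc)
qed

lemma walk_mat_hat_eq_folded_walk_mat:
  assumes "4 \<le> n"
  shows "walk_mat_hat n = folded_walk_mat (n - 1)"
  using assms walk_vec_eq_folded_walk[OF assms]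
  by (intro eq_matI) (auto simp: walk_mat_hat_def walk_mat_def folded_walk_mat_def walk_vec_def)

section \<open>Chebyshev-type columns\<close>

text \<open>\<open>cheb_col m j = p\<^sub>j(B) e\<close> for the fold operator \<open>B\<close> and the monic polynomials
  \<open>p\<^sub>0 = 1\<close>, \<open>p\<^sub>1 = x - 1\<close>, \<open>p\<^sub>j\<^sub>+\<^sub>2 = x p\<^sub>j\<^sub>+\<^sub>1 - p\<^sub>j + cheb_const (j + 1)\<close>, whose coefficients are
  \<open>cheb_coeff j\<close>. For \<open>j \<ge> 2\<close> this recursion makes \<open>p\<^sub>j(B) e\<close> a combination of four unit
  vectors.\<close>

definition cheb_col :: "nat \<Rightarrow> nat \<Rightarrow> nat \<Rightarrow> real" where
  "cheb_col m j i = (if j = 0 then 1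
     else if j = 1 then (if i = 1 then 2 else if 2 \<le> i \<and> i + 2 \<le> m then 1 else 0)
     else (if i = j then 1 else 0) - (if i + 1 = j then 1 else 0)
       - (if i + j = m then 1 else 0) - (if i + j = m + 1 then 1 else 0))"

definition cheb_const :: "nat \<Rightarrow> real" where
  "cheb_const j = (if j = 1 then -1 else if j = 2 then 1 else 0)"

fun cheb_coeff :: "nat \<Rightarrow> nat \<Rightarrow> real" where
  "cheb_coeff 0 = (\<lambda>k. if k = 0 then 1 else 0)"
| "cheb_coeff (Suc 0) = (\<lambda>k. if k = 1 then 1 else if k = 0 then -1 else 0)"
| "cheb_coeff (Suc (Suc j)) = (\<lambda>k. (if k = 0 then 0 else cheb_coeff (Suc j) (k - 1)) - cheb_coeff j k
     + (if k = 0 then cheb_const (Suc j) else 0))"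

lemma nat_0_1_add_2_cases:
  fixes t :: nat
  obtains "t = 0" | "t = 1" | s where "t = s + 2"
  by (metis add_2_eq_Suc' not0_implies_Suc One_nat_def)

lemma cheb_col_one:
  assumes "3 \<le> m" and "t < m"
  shows "cheb_col m 1 t = fold_step m (\<lambda>_. 1) t - 1"
  by (rule nat_0_1_add_2_cases[of t]) (use assms in \<open>simp_all add: cheb_col_def fold_step_def\<close>)

lemma cheb_col_rec:
  assumes "Suc (Suc j) < m" and "t < m"
  shows "cheb_col m (Suc (Suc j)) t = fold_step m (cheb_col m (Suc j)) t - cheb_col m j t + cheb_const (Suc j)"
  using assms by (cases j rule: nat_0_1_add_2_cases; cases t rule: nat_0_1_add_2_cases)
    (simp_all add: cheb_col_def fold_step_def cheb_const_def)

lemma cheb_coeff_eq_0: "j < k \<Longrightarrow> cheb_coeff j k = 0"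
proof (induction j arbitrary: k rule: less_induct)
  case (less j)
  show ?case
  proof (cases j rule: nat_0_1_add_2_cases)
    case (3 i)
    then show ?thesis
      using less.IH[of "Suc i" "k - 1"] less.IH[of i k] less.prems by (simp add: numeral_2_eq_2)
  qed (use less.prems in auto)
qed

lemma cheb_coeff_diag: "cheb_coeff j j = 1"
  by (induction j rule: cheb_coeff.induct) (auto simp: cheb_coeff_eq_0)

lemma fold_step_sum:
  "fold_step m (\<lambda>s. \<Sum>k\<in>A. c k * f k s) t = (\<Sum>k\<in>A. c k * fold_step m (f k) t)"
  by (simp add: fold_step_def sum_distrib_left sum.distrib algebra_simps)

lemma fold_step_cong:
  assumes "\<And>s. s < m \<Longrightarrow> x s = y s" and "t < m"
  shows "fold_step m x t = fold_step m y t"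
  using assms by (simp add: fold_step_def)

lemma sum_shift_folded_walk:
  assumes "c (m - 1) = 0"
  shows "(\<Sum>k<m. (if k = 0 then 0 else c (k - 1)) * folded_walk m k t)
    = fold_step m (\<lambda>s. \<Sum>k<m. c k * folded_walk m k s) t"
proof (cases m)
  case (Suc m')
  have "(\<Sum>k<m. (if k = 0 then 0 else c (k - 1)) * folded_walk m k t)
      = (\<Sum>k<m'. c k * folded_walk m (Suc k) t)"
    unfolding Suc by (subst sum.lessThan_Suc_shift) simp
  also have "\<dots> = (\<Sum>k<m. c k * folded_walk m (Suc k) t)"
    using assms Suc by simp
  finally show ?thesis by (simp add: fold_step_sum)
qed (simp add: fold_step_def)

lemma sum_cheb_coeff_folded_walk:
  assumes m: "3 \<le> m"
  shows "j < m \<Longrightarrow> t < m \<Longrightarrow> (\<Sum>k<m. cheb_coeff j k * folded_walk m k t) = cheb_col m j t"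
proof (induction j arbitrary: t rule: cheb_coeff.induct)
  case 1
  have "(\<Sum>k<m. cheb_coeff 0 k * folded_walk m k t) = (\<Sum>k<m. if k = 0 then 1 else 0)"
    by (intro sum.cong) auto
  then show ?case using m by (simp add: cheb_col_def)
next
  case 2
  have "(\<Sum>k<m. cheb_coeff (Suc 0) k * folded_walk m k t)
      = (\<Sum>k<m. if k = 1 then folded_walk m k t else 0) - (\<Sum>k<m. if k = 0 then folded_walk m k t else 0)"
    unfolding sum_subtractf[symmetric] by (rule sum.cong) auto
  also have "\<dots> = fold_step m (\<lambda>_. 1) t - 1"
    using m by (simp add: sum.delta)
  finally show ?case using cheb_col_one[OF m 2(2)] by simp
next
  case (3 j)
  let ?shift = "\<lambda>k. if k = 0 then 0 else cheb_coeff (Suc j) (k - 1)"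
  have "(\<Sum>k<m. cheb_coeff (Suc (Suc j)) k * folded_walk m k t)
      = (\<Sum>k<m. ?shift k * folded_walk m k t - cheb_coeff j k * folded_walk m k t
          + (if k = 0 then cheb_const (Suc j) else 0))"
    by (intro sum.cong) (auto simp: left_diff_distrib distrib_right)
  also have "\<dots> = (\<Sum>k<m. ?shift k * folded_walk m k t) - (\<Sum>k<m. cheb_coeff j k * folded_walk m k t)
      + (\<Sum>k<m. if k = 0 then cheb_const (Suc j) else 0)"
    by (simp only: sum.distrib sum_subtractf)
  also have "(\<Sum>k<m. ?shift k * folded_walk m k t) = fold_step m (cheb_col m (Suc j)) t"
  proof -
    have "cheb_coeff (Suc j) (m - 1) = 0" using 3(3) by (intro cheb_coeff_eq_0) linarith
    then have "(\<Sum>k<m. ?shift k * folded_walk m k t)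
        = fold_step m (\<lambda>s. \<Sum>k<m. cheb_coeff (Suc j) k * folded_walk m k s) t"
      by (rule sum_shift_folded_walk)
    also have "\<dots> = fold_step m (cheb_col m (Suc j)) t"
      using 3 by (intro fold_step_cong) auto
    finally show ?thesis .
  qed
  also have "(\<Sum>k<m. cheb_coeff j k * folded_walk m k t) = cheb_col m j t"
    using 3 by simp
  also have "(\<Sum>k<m. if k = 0 then cheb_const (Suc j) else 0) = cheb_const (Suc j)"
    using m by simp
  finally show ?case
    using cheb_col_rec[of j m t] 3 by simp
qed

definition cheb_col_mat :: "nat \<Rightarrow> real mat" where
  "cheb_col_mat m = mat m m (\<lambda>(i, j). cheb_col m j i)"

lemma folded_walk_mat_mult_cheb_coeff:
  assumes "3 \<le> m"
  shows "folded_walk_mat m * mat m m (\<lambda>(k, j). cheb_coeff j k) = cheb_col_mat m"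
proof (rule eq_matI)
  fix i j assume "i < dim_row (cheb_col_mat m)" and "j < dim_col (cheb_col_mat m)"
  then have i: "i < m" and j: "j < m" by (auto simp: cheb_col_mat_def)
  have "(folded_walk_mat m * mat m m (\<lambda>(k, j). cheb_coeff j k)) $$ (i, j)
      = (\<Sum>k<m. cheb_coeff j k * folded_walk m k i)"
    using index_mult_mat_sum[of "folded_walk_mat m" m i j "\<lambda>(k, j). cheb_coeff j k"] i j
    by (simp add: folded_walk_mat_def mult.commute)
  then show "(folded_walk_mat m * mat m m (\<lambda>(k, j). cheb_coeff j k)) $$ (i, j) = cheb_col_mat m $$ (i, j)"
    using sum_cheb_coeff_folded_walk[OF assms j i] i j by (simp add: cheb_col_mat_def)
qed (auto simp: cheb_col_mat_def folded_walk_mat_def)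

lemma det_cheb_coeff_mat: "det (mat m m (\<lambda>(k, j). cheb_coeff j k)) = 1"
  using cheb_coeff_diag cheb_coeff_eq_0 by (intro det_unitriangular) auto

lemma folded_walk_mat_reduces_to_cheb_col_mat:
  assumes "3 \<le> m"
  shows "col_reduces_to m (folded_walk_mat m) (cheb_col_mat m)"
  unfolding col_reduces_to_def
  using folded_walk_mat_mult_cheb_coeff[OF assms] det_cheb_coeff_mat by (intro bexI) auto

section \<open>Pairing and clearing columns\<close>

text \<open>Adding \<open>cheb_col (m + 1 - j)\<close> to \<open>cheb_col j\<close> for \<open>j > (m + 1)/2\<close>, and then halving the
  difference for \<open>j < (m + 1)/2\<close>, leaves columns with at most two nonzero entries.\<close>

definition paired_col :: "nat \<Rightarrow> nat \<Rightarrow> nat \<Rightarrow> real" where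
  "paired_col m j i = (if j = 0 then 1 else if j = 1 then cheb_col m 1 i
     else if 2 * j \<le> m then (if i = j then 1 else 0) - (if i + j = m + 1 then 1 else 0)
     else (if i + j = m \<or> i + 1 = j then -2 else 0))"

definition paired_col_mat :: "nat \<Rightarrow> real mat" where
  "paired_col_mat m = mat m m (\<lambda>(i, j). paired_col m j i)"

lemma cheb_col_ge_2:
  assumes "2 \<le> j"
  shows "cheb_col m j i = (if i = j then 1 else 0) - (if i + 1 = j then 1 else 0)
    - (if i + j = m then 1 else 0) - (if i + j = m + 1 then 1 else 0)"
  using assms by (simp add: cheb_col_def)

lemma cheb_col_reflect:
  assumes "2 \<le> j" "j < m"
  shows "cheb_col m (m + 1 - j) i = (if i + j = m + 1 then 1 else 0) - (if i + j = m then 1 else 0)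
     - (if i + 1 = j then 1 else 0) - (if i = j then 1 else 0)"
proof -
  have "(i = m + 1 - j) = (i + j = m + 1)" "(i + 1 = m + 1 - j) = (i + j = m)"
     "(i + (m + 1 - j) = m) = (i + 1 = j)" "(i + (m + 1 - j) = m + 1) = (i = j)" using assms by auto
  then show ?thesis using assms by (subst cheb_col_ge_2) auto
qed

lemma paired_col_eq:
  assumes m: "3 \<le> m" and j: "j < m"
  shows "paired_col m j i = cheb_col m j i + (if m + 1 < 2 * j then cheb_col m (m + 1 - j) i else 0)
     + (if 2 \<le> j \<and> 2 * j < m + 1 then - 1 / 2 * (cheb_col m (m + 1 - j) i + cheb_col m j i) else 0)"
proof -
  consider "j \<le> 1" | "2 \<le> j" "2 * j \<le> m" | "2 * j = m + 1" | "m + 1 < 2 * j" by linarith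
  then show ?thesis
  proof cases
    case 1
    then show ?thesis using m by (auto simp: cheb_col_def paired_col_def)
  next
    case 2
    then show ?thesis using cheb_col_ge_2[of j m i] cheb_col_reflect[OF 2(1) j, of i]
      by (simp add: paired_col_def)
  next
    case 3
    then have "2 \<le> j" "(i = j) = (i + j = m + 1)" "(i + 1 = j) = (i + j = m)" using m by auto
    then show ?thesis using 3 cheb_col_ge_2[of j m i] by (simp add: paired_col_def)
  next
    case 4
    then have "2 \<le> j" "\<not> (i + j = m \<and> i + 1 = j)" using m by auto
    then show ?thesis using 4 cheb_col_ge_2[of j m i] cheb_col_reflect[OF _ j, of i]
      by (auto simp: paired_col_def)
  qed
qed

lemma cheb_col_mat_reduces_to_paired_col_mat:
  assumes m: "3 \<le> m"
  shows "col_reduces_to m (cheb_col_mat m) (paired_col_mat m)"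
proof -
  let ?pair = "mat m m (\<lambda>(i, j). cheb_col m j i + (if m + 1 < 2 * j then cheb_col m (m + 1 - j) i else 0))"
  have Z: "cheb_col_mat m \<in> carrier_mat m m" by (simp add: cheb_col_mat_def)
  have pair_up: "cheb_col_mat m * column_op_mat m (\<lambda>k j. if k = m + 1 - j \<and> m + 1 < 2 * j then 1 else 0) = ?pair"
    unfolding mult_column_op_mat_single[OF Z] using m by (intro eq_matI) (auto simp: cheb_col_mat_def)
  have pair_down: "?pair * column_op_mat m (\<lambda>k j. if k = m + 1 - j \<and> 2 \<le> j \<and> 2 * j < m + 1 then - 1 / 2 else 0)
      = paired_col_mat m"
  proof (rule eq_matI)
    fix i j assume "i < dim_row (paired_col_mat m)" and "j < dim_col (paired_col_mat m)"
    then have i: "i < m" and j: "j < m" by (auto simp: paired_col_mat_def)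
    show "(?pair * column_op_mat m (\<lambda>k j. if k = m + 1 - j \<and> 2 \<le> j \<and> 2 * j < m + 1 then - 1 / 2 else 0))
        $$ (i, j) = paired_col_mat m $$ (i, j)"
      unfolding mult_column_op_mat_single[of ?pair m, OF mat_carrier]
      using i j paired_col_eq[OF m j, of i] by (auto simp: paired_col_mat_def)
  qed (auto simp: paired_col_mat_def)
  have "col_reduces_to m (cheb_col_mat m) ?pair"
    unfolding pair_up[symmetric] by (intro col_reduces_to_column_op disjI1) auto
  moreover have "col_reduces_to m ?pair (paired_col_mat m)"
    unfolding pair_down[symmetric] by (intro col_reduces_to_column_op disjI2) auto
  ultimately show ?thesis by (rule col_reduces_to_trans[OF Z])
qed

definition period4 :: "real \<Rightarrow> real \<Rightarrow> real \<Rightarrow> real \<Rightarrow> nat \<Rightarrow> real" where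
  "period4 a b c d x = (if x mod 4 = 0 then a else if x mod 4 = 1 then b else if x mod 4 = 2 then c else d)"

lemma period4_Suc: "period4 a b c d (Suc x) = period4 b c d a x"
  using mod_less_divisor[of 4 x] by (auto simp: period4_def mod_Suc)

lemma period4_add_mult_4 [simp]: "period4 a b c d (4 * p + x) = period4 a b c d x"
  by (simp add: period4_def)

definition mid_row :: "nat \<Rightarrow> nat" where
  "mid_row m = m - m div 2"

text \<open>Row \<open>i\<close> of \<open>paired_col_mat m\<close> meets the columns \<open>k \<ge> 2\<close> only at
  \<open>k \<in> {i, m + 1 - i, m - i, i + 1}\<close>, so these columns link the rows \<open>1, \<dots>, m - 1\<close> into paths
  running from the rows \<open>1\<close> and \<open>m - 1\<close> towards row \<open>mid_row m\<close>. Clearing column 1 along them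
  from both ends yields the period-4 coefficients \<open>clear_coeff\<close> and leaves only the entry
  \<open>mid_residue m\<close> at row \<open>mid_row m\<close>.\<close>

definition clear_coeff :: "nat \<Rightarrow> nat \<Rightarrow> real" where
  "clear_coeff m k = (if k < 2 then 0 else if 2 * k \<le> m then period4 0 (-1) 0 1 k
     else period4 (-1/2) (-1) (-1/2) 0 (m - k))"

definition mid_residue :: "nat \<Rightarrow> real" where
  "mid_residue m = (if m mod 4 = 3 then 0 else if m mod 8 \<le> 2 then 1 else -1)"

lemma clear_coeff_less_2: "k < 2 \<Longrightarrow> clear_coeff m k = 0"
  by (simp add: clear_coeff_def)

lemma sum_paired_col_row:
  assumes i: "i < m" and c: "\<And>k. k < 2 \<Longrightarrow> c k = 0"
  shows "(\<Sum>k<m. paired_col m k i * c k) = (if 2 \<le> i \<and> 2 * i \<le> m then c i else 0)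
    - (if 2 \<le> m + 1 - i \<and> 2 * (m + 1 - i) \<le> m then c (m + 1 - i) else 0)
    - 2 * sum c ({m - i, i + 1} \<inter> {k. k < m \<and> m < 2 * k})"
    (is "_ = ?a - ?b - 2 * sum c ?S")
proof -
  have "paired_col m k i * c k = (if k = i then ?a else 0) - (if k = m + 1 - i then ?b else 0)
      - 2 * (if k \<in> ?S then c k else 0)" if "k < m" for k
  proof (cases "k < 2")
    case True
    then show ?thesis using c[OF True] by auto
  next
    case False
    have eqs: "i + k = m + 1 \<longleftrightarrow> k = m + 1 - i" "i + k = m \<longleftrightarrow> k = m - i" using i by auto
    show ?thesis
    proof (cases "2 * k \<le> m")
      case True
      then have "k \<notin> ?S" "k = i \<Longrightarrow> ?a = c k" "k = m + 1 - i \<Longrightarrow> ?b = c k"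
        "k = m + 1 - i \<Longrightarrow> k \<noteq> i"
        using False by auto
      then show ?thesis using True False eqs by (auto simp: paired_col_def)
    next
      case big: False
      then have "k \<in> ?S \<longleftrightarrow> k = m - i \<or> k = i + 1" "k = i \<Longrightarrow> ?a = 0" "k = m + 1 - i \<Longrightarrow> ?b = 0"
        using that by auto
      then show ?thesis using big False eqs by (auto simp: paired_col_def)
    qed
  qed
  then have "(\<Sum>k<m. paired_col m k i * c k) = (\<Sum>k<m. (if k = i then ?a else 0) - (if k = m + 1 - i then ?b else 0)
      - 2 * (if k \<in> ?S then c k else 0))"
    by (intro sum.cong) auto
  also have "\<dots> = (\<Sum>k<m. if k = i then ?a else 0) - (\<Sum>k<m. if k = m + 1 - i then ?b else 0)
      - 2 * (\<Sum>k<m. if k \<in> ?S then c k else 0)"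
    by (simp only: sum_subtractf sum_distrib_left)
  also have "(\<Sum>k<m. if k = i then ?a else 0) = ?a"
    using i by simp
  also have "(\<Sum>k<m. if k = m + 1 - i then ?b else 0) = ?b"
    by (simp split: if_split_asm)
  also have "(\<Sum>k<m. if k \<in> ?S then c k else 0) = sum c ?S"
    by (subst sum.inter_restrict[symmetric]) (auto intro: arg_cong[where f = "sum c"])
  finally show ?thesis .
qed

lemma mid_row_bounds:
  assumes "3 \<le> m"
  shows "2 \<le> mid_row m" "mid_row m < m" "2 * mid_row m \<le> m + 1" "m \<le> 2 * mid_row m"
  using assms by (auto simp: mid_row_def)

lemmas sum_paired_col_clear_coeff =
  sum_paired_col_row[where c = "clear_coeff m" for m, OF _ clear_coeff_less_2]

lemma clear_row_small:
  assumes m: "3 \<le> m" and i: "1 \<le> i" "i < mid_row m"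
  shows "cheb_col m 1 i - (\<Sum>k<m. paired_col m k i * clear_coeff m k) = 0"
proof -
  have i': "2 * i < m" "i < m" using i by (auto simp: mid_row_def)
  then have "{m - i, i + 1} \<inter> {k. k < m \<and> m < 2 * k} = {m - i}" using i by auto
  moreover have "\<not> 2 * (m + 1 - i) \<le> m" "\<not> 2 * (m - i) \<le> m" "\<not> m - i < 2" using i' i m by auto
  ultimately have "(\<Sum>k<m. paired_col m k i * clear_coeff m k)
      = (if 2 \<le> i then period4 0 (-1) 0 1 i else 0) - 2 * period4 (-1/2) (-1) (-1/2) 0 i"
    using sum_paired_col_clear_coeff[OF i'(2)] i' by (simp add: clear_coeff_def)
  moreover have "cheb_col m 1 i = (if i = 1 then 2 else 1)"
    using i' i m by (auto simp: cheb_col_def)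
  ultimately show ?thesis
    using i by (auto simp: period4_def)
qed

lemma clear_row_large:
  assumes m: "3 \<le> m" and i: "mid_row m < i" "i < m"
  shows "cheb_col m 1 i - (\<Sum>k<m. paired_col m k i * clear_coeff m k) = 0"
proof -
  define d where "d = m - i"
  have d: "1 \<le> d" "2 * d + 2 \<le> m" "i = m - d" using i by (auto simp: d_def mid_row_def)
  let ?S = "{m - i, i + 1} \<inter> {k. k < m \<and> m < 2 * k}"
  have "\<not> 2 * i \<le> m" "m + 1 - i = d + 1" "2 * (d + 1) \<le> m" using d by auto
  then have row: "(\<Sum>k<m. paired_col m k i * clear_coeff m k)
      = - period4 0 (-1) 0 1 (d + 1) - 2 * sum (clear_coeff m) ?S"
    using sum_paired_col_clear_coeff[OF i(2)] d(1) by (simp add: clear_coeff_def)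
  show ?thesis
  proof (cases "d = 1")
    case True
    then have "?S = {}" "cheb_col m 1 i = 0" using d by (auto simp: cheb_col_def)
    with row True show ?thesis by (simp add: period4_def)
  next
    case False
    then obtain e where e: "d = e + 2" using d(1) le_Suc_ex[of 2 d] by force
    have "?S = {i + 1}" "cheb_col m 1 i = 1" using d e by (auto simp: cheb_col_def)
    moreover have "clear_coeff m (i + 1) = period4 (-1/2) (-1) (-1/2) 0 (d - 1)"
    proof -
      have "\<not> i + 1 < 2" "\<not> 2 * (i + 1) \<le> m" "m - (i + 1) = d - 1" using d e by auto
      then show ?thesis by (simp add: clear_coeff_def)
    qed
    moreover have "1 + period4 0 (-1) 0 1 (d + 1) + 2 * period4 (-1/2) (-1) (-1/2) 0 (d - 1) = 0"
      unfolding e by (simp add: numeral_eq_Suc period4_Suc) (simp add: period4_def)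
    ultimately show ?thesis using row by simp
  qed
qed

lemma clear_row_mid:
  assumes m: "3 \<le> m"
  shows "cheb_col m 1 (mid_row m) - (\<Sum>k<m. paired_col m k (mid_row m) * clear_coeff m k) = mid_residue m"
proof -
  define e where "e = m div 2 - 1"
  define b where "b = m mod 2"
  have mb: "m = 2 * e + 2 + b" "b < 2" "mid_row m = e + 1 + b"
    using m unfolding e_def b_def mid_row_def by presburger+
  let ?S = "{m - mid_row m, mid_row m + 1} \<inter> {k. k < m \<and> m < 2 * k}"
  have "2 \<le> mid_row m \<and> 2 * mid_row m \<le> m \<longleftrightarrow> b = 0" "\<not> 2 * (m + 1 - mid_row m) \<le> m"
    using mb m by auto
  moreover have "clear_coeff m (mid_row m) = period4 0 (-1) 0 1 (e + 1)" if "b = 0"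
    using that mb m by (simp add: clear_coeff_def)
  ultimately have row: "(\<Sum>k<m. paired_col m k (mid_row m) * clear_coeff m k)
      = (if b = 0 then period4 0 (-1) 0 1 (e + 1) else 0) - 2 * sum (clear_coeff m) ?S"
    using sum_paired_col_clear_coeff[OF mid_row_bounds(2)[OF m]] by simp
  show ?thesis
  proof (cases "e = 0")
    case True
    then have "b = 1" "?S = {}" "cheb_col m 1 (mid_row m) = 0" "m mod 4 = 3"
      using mb m by (auto simp: cheb_col_def)
    with row show ?thesis by (simp add: mid_residue_def)
  next
    case False
    have "?S = {mid_row m + 1}" "cheb_col m 1 (mid_row m) = 1" using mb False by (auto simp: cheb_col_def)
    moreover have "clear_coeff m (mid_row m + 1) = period4 (-1/2) (-1) (-1/2) 0 e"
    proof -
      have "\<not> mid_row m + 1 < 2" "\<not> 2 * (mid_row m + 1) \<le> m" "m - (mid_row m + 1) = e" using mb by auto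
      then show ?thesis by (simp add: clear_coeff_def)
    qed
    ultimately have "cheb_col m 1 (mid_row m) - (\<Sum>k<m. paired_col m k (mid_row m) * clear_coeff m k)
        = 1 - (if b = 0 then period4 0 (-1) 0 1 (e + 1) else 0) + 2 * period4 (-1/2) (-1) (-1/2) 0 e"
      using row by simp
    also have "\<dots> = mid_residue m"
    proof -
      define p where "p = e div 4"
      define s where "s = e mod 4"
      have ps: "e = 4 * p + s" "s < 4" by (simp_all add: p_def s_def)
      have "m = 4 * (2 * p) + (2 * s + 2 + b)" "m = 8 * p + (2 * s + 2 + b)" using mb ps by simp_all
      then have "m mod 4 = (2 * s + 2 + b) mod 4" "m mod 8 = (2 * s + 2 + b) mod 8"
        by (metis mod_mult_self3 mult.commute)+
      moreover have "s = 0 \<or> s = 1 \<or> s = 2 \<or> s = 3" "b = 0 \<or> b = 1" using ps(2) mb(2) by auto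
      ultimately show ?thesis
        unfolding ps(1) mid_residue_def by (simp add: period4_Suc) (elim disjE; simp add: period4_def)
    qed
    finally show ?thesis .
  qed
qed

lemma clear_row:
  assumes m: "3 \<le> m" and i: "i < m"
  shows "cheb_col m 1 i - (\<Sum>k<m. paired_col m k i * clear_coeff m k)
    = (if i = mid_row m then mid_residue m else 0)"
proof -
  consider "i = 0" | "1 \<le> i" "i < mid_row m" | "i = mid_row m" | "mid_row m < i" by linarith
  then show ?thesis
  proof cases
    case 1
    then have "{m - i, i + 1} \<inter> {k. k < m \<and> m < 2 * k} = {}" using m by auto
    then show ?thesis
      using 1 m mid_row_bounds[OF m] sum_paired_col_clear_coeff[OF i] by (simp add: cheb_col_def)
  qed (use clear_row_small[OF m] clear_row_mid[OF m] clear_row_large[OF m] i in auto)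
qed

definition reduced_mat :: "nat \<Rightarrow> real \<Rightarrow> real mat" where
  "reduced_mat m g = mat m m (\<lambda>(i, j). if j = 1 then (if i = mid_row m then g else 0) else paired_col m j i)"

lemma paired_col_mat_reduces_to_reduced_mat:
  assumes m: "3 \<le> m"
  shows "col_reduces_to m (paired_col_mat m) (reduced_mat m (mid_residue m))"
proof -
  have N: "paired_col_mat m \<in> carrier_mat m m" by (simp add: paired_col_mat_def)
  let ?C = "\<lambda>k j. if j = 1 then - clear_coeff m k else 0"
  have "paired_col_mat m * column_op_mat m ?C = reduced_mat m (mid_residue m)"
  proof (rule eq_matI)
    fix i j assume "i < dim_row (reduced_mat m (mid_residue m))" "j < dim_col (reduced_mat m (mid_residue m))"
    then have i: "i < m" and j: "j < m" by (auto simp: reduced_mat_def)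
    have "(paired_col_mat m * column_op_mat m ?C) $$ (i, j)
        = paired_col m j i + (if j = 1 then - (\<Sum>k<m. paired_col m k i * clear_coeff m k) else 0)"
      unfolding index_mult_column_op_mat[OF N i j] using i j
      by (cases "j = 1") (simp_all add: paired_col_mat_def sum_negf)
    then show "(paired_col_mat m * column_op_mat m ?C) $$ (i, j) = reduced_mat m (mid_residue m) $$ (i, j)"
      using clear_row[OF m i] i j by (simp add: reduced_mat_def paired_col_def)
  qed (auto simp: reduced_mat_def paired_col_mat_def)
  moreover have "col_reduces_to m (paired_col_mat m) (paired_col_mat m * column_op_mat m ?C)"
    by (intro col_reduces_to_column_op disjI2) (auto simp: clear_coeff_def)
  ultimately show ?thesis by simp
qed

section \<open>Determinant and rank\<close>

definition pivot_row :: "nat \<Rightarrow> nat \<Rightarrow> nat" where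
  "pivot_row m j = (if j = 0 then 0 else if j = 1 then mid_row m else if 2 * j \<le> m then m + 1 - j else m - j)"

definition pivot_col :: "nat \<Rightarrow> nat \<Rightarrow> nat" where
  "pivot_col m i = (if i = 0 then 0 else if i = mid_row m then 1 else if mid_row m < i then m + 1 - i else m - i)"

lemma bij_pivot_row:
  assumes "3 \<le> m"
  shows "bij_betw (pivot_row m) {..<m} {..<m}"
proof (rule bij_betw_byWitness[where f' = "pivot_col m"])
  define a where "a = m div 2"
  define b where "b = m mod 2"
  have ab: "m = 2 * a + b" "b \<le> 1" "mid_row m = a + b"
    unfolding a_def b_def mid_row_def by presburger+
  then show "\<forall>j\<in>{..<m}. pivot_col m (pivot_row m j) = j" "\<forall>i\<in>{..<m}. pivot_row m (pivot_col m i) = i"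
    "pivot_row m ` {..<m} \<subseteq> {..<m}" "pivot_col m ` {..<m} \<subseteq> {..<m}"
    using assms unfolding pivot_row_def pivot_col_def ab(3) by auto
qed

lemma reduced_mat_dominated:
  assumes m: "3 \<le> m" and i: "i < m" and j: "j < m" and nz: "reduced_mat m g $$ (i, j) \<noteq> 0"
  shows "i = pivot_row m j \<or> min (pivot_row m j) (m - pivot_row m j) < min i (m - i)"
proof -
  have "m = 2 * (m div 2) + m mod 2" "m mod 2 \<le> 1" "mid_row m = m div 2 + m mod 2"
    unfolding mid_row_def by presburger+
  moreover have "i = j \<or> i + j = m + 1" if "2 \<le> j" "2 * j \<le> m"
    using nz that i j by (auto simp: reduced_mat_def paired_col_def split: if_splits)
  moreover have "i + j = m \<or> i + 1 = j" if "2 \<le> j" "m < 2 * j"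
    using nz that i j by (auto simp: reduced_mat_def paired_col_def split: if_splits)
  moreover have "i = mid_row m" if "j = 1"
    using nz that i j by (auto simp: reduced_mat_def split: if_splits)
  ultimately show ?thesis
    using i j m unfolding pivot_row_def by (cases "j \<le> 1") auto
qed

lemma abs_det_reduced_mat:
  assumes m: "3 \<le> m"
  shows "\<bar>det (reduced_mat m g)\<bar> = \<bar>g\<bar> * 2 ^ (m - (m div 2 + 1))"
proof -
  let ?R = "reduced_mat m g"
  have "\<bar>det ?R\<bar> = \<bar>\<Prod>j<m. ?R $$ (pivot_row m j, j)\<bar>"
    by (rule abs_det_eq_abs_prod_pivots[OF _ bij_pivot_row[OF m] reduced_mat_dominated[OF m]])
      (simp add: reduced_mat_def)
  also have "(\<Prod>j<m. ?R $$ (pivot_row m j, j)) = (\<Prod>j\<in>{0, 1} \<union> {2..<m}. ?R $$ (pivot_row m j, j))"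
    using m by (intro prod.cong) auto
  also have "\<dots> = g * (\<Prod>j\<in>{2..<m}. if 2 * j \<le> m then -1 else -2)"
  proof -
    have "?R $$ (pivot_row m j, j) = (if 2 * j \<le> m then -1 else -2)" if "j \<in> {2..<m}" for j
      using that by (auto simp: reduced_mat_def pivot_row_def paired_col_def)
    moreover have "?R $$ (pivot_row m 0, 0) = 1" "?R $$ (pivot_row m 1, 1) = g"
      using m mid_row_bounds[OF m] by (auto simp: reduced_mat_def pivot_row_def paired_col_def)
    ultimately show ?thesis by (simp add: prod.union_disjoint)
  qed
  finally have "\<bar>det ?R\<bar> = \<bar>g\<bar> * (\<Prod>j\<in>{2..<m}. if 2 * j \<le> m then 1 else 2)"
    by (simp add: abs_mult abs_prod if_distrib cong: if_cong)
  also have "(\<Prod>j\<in>{2..<m}. if 2 * j \<le> m then 1 else 2 :: real) = (\<Prod>j\<in>{m div 2 + 1..<m}. 2)"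
  proof -
    have split: "2 \<le> m div 2 + 1" "m div 2 + 1 \<le> m" using m by auto
    have "(\<Prod>j\<in>{2..<m div 2 + 1}. if 2 * j \<le> m then 1 else 2 :: real) = 1"
      by (rule prod.neutral) auto
    moreover have "(\<Prod>j\<in>{m div 2 + 1..<m}. if 2 * j \<le> m then 1 else 2 :: real) = (\<Prod>j\<in>{m div 2 + 1..<m}. 2)"
      by (rule prod.cong) auto
    ultimately show ?thesis
      by (simp add: prod.atLeastLessThan_concat[OF split, symmetric])
  qed
  finally show ?thesis by simp
qed

lemma folded_walk_mat_reduces_to_reduced_mat:
  assumes "3 \<le> m"
  shows "col_reduces_to m (folded_walk_mat m) (reduced_mat m (mid_residue m))"
proof -
  have "folded_walk_mat m \<in> carrier_mat m m" "cheb_col_mat m \<in> carrier_mat m m"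
    by (simp_all add: folded_walk_mat_def cheb_col_mat_def)
  then show ?thesis
    using folded_walk_mat_reduces_to_cheb_col_mat[OF assms] cheb_col_mat_reduces_to_paired_col_mat[OF assms]
      paired_col_mat_reduces_to_reduced_mat[OF assms] col_reduces_to_trans by blast
qed

lemma abs_det_folded_walk_mat:
  assumes "3 \<le> m"
  shows "\<bar>det (folded_walk_mat m)\<bar> = \<bar>mid_residue m\<bar> * 2 ^ (m - (m div 2 + 1))"
proof -
  have "det (reduced_mat m (mid_residue m)) = det (folded_walk_mat m)"
    by (rule col_reduces_to_det[OF _ folded_walk_mat_reduces_to_reduced_mat[OF assms]])
      (simp add: folded_walk_mat_def)
  with abs_det_reduced_mat[OF assms, of "mid_residue m"] show ?thesis by simp
qed

lemma rank_folded_walk_mat: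
  assumes m: "3 \<le> m" and "m mod 4 = 3"
  shows "vec_space.rank m (folded_walk_mat m) = m - 1"
proof -
  let ?K = "folded_walk_mat m"
  let ?E = "mat m m (\<lambda>(i, j). if i = mid_row m \<and> j = 1 then 1 else 0) :: real mat"
  have K: "?K \<in> carrier_mat m m" by (simp add: folded_walk_mat_def)
  have "mid_residue m = 0" using assms(2) by (simp add: mid_residue_def)
  then obtain T' where T': "T' \<in> carrier_mat m m" "det T' \<noteq> 0" "?K = reduced_mat m 0 * T'"
    using col_reduces_to_inverse[OF K folded_walk_mat_reduces_to_reduced_mat[OF m]] by metis
  have "reduced_mat m 1 = reduced_mat m 0 + ?E"
    by (rule eq_matI) (auto simp: reduced_mat_def)
  then have "?K + ?E * T' = reduced_mat m 1 * T'"
    using add_mult_distrib_mat[of "reduced_mat m 0" m m ?E T' m] T' by (simp add: reduced_mat_def)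
  moreover have "det (reduced_mat m 1) \<noteq> 0"
    using abs_det_reduced_mat[OF m, of 1] by auto
  ultimately have "det (?K + ?E * T') \<noteq> 0"
    using det_mult[OF _ T'(1), of "reduced_mat m 1"] T'(2) by (simp add: reduced_mat_def)
  moreover have "det ?K = 0"
    using abs_det_folded_walk_mat[OF m] \<open>mid_residue m = 0\<close> by simp
  ultimately show ?thesis
    using rank_single_entry_mult_le_1[OF T'(1) mid_row_bounds(2)[OF m], of 1] m T'(1)
    by (intro rank_eq_minus_one_if_rank_one_update[OF K, of "?E * T'"]) auto
qed

lemma abs_det_walk_mat_hat:
  assumes n: "4 \<le> n"
  shows "\<bar>det (walk_mat_hat n)\<bar> = \<bar>mid_residue (n - 1)\<bar> * 2 ^ (n div 2 - 1)"
proof -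
  have "n - 1 - ((n - 1) div 2 + 1) = n div 2 - 1"
  proof (cases "even n")
    case True
    then obtain k where "n = 2 * k" by (rule evenE)
    then show ?thesis using n by (cases k) auto
  next
    case False
    then obtain k where "n = 2 * k + 1" by (rule oddE)
    then show ?thesis by simp
  qed
  then show ?thesis
    using abs_det_folded_walk_mat[of "n - 1"] walk_mat_hat_eq_folded_walk_mat[OF n] n by simp
qed

theorem theorem1p2:
  fixes n :: nat
  assumes "n \<ge> 4"
  shows "(\<not> 4 dvd n \<longrightarrow>
            det (walk_mat_hat n) = 2 ^ (n div 2 - 1) \<or>
            det (walk_mat_hat n) = - (2 ^ (n div 2 - 1)))
       \<and> (4 dvd n \<longrightarrow> vec_space.rank (n - 1) (walk_mat_hat n) = n - 2)"
proof -
  have n: "n = Suc (n - 1)" "3 \<le> n - 1" using assms by auto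
  have "4 dvd Suc (n - 1) \<longleftrightarrow> (n - 1) mod 4 = 3"
    by (simp add: dvd_eq_mod_eq_0 mod_Suc)
  then have four_dvd: "4 dvd n \<longleftrightarrow> (n - 1) mod 4 = 3"
    using n(1) by simp
  show ?thesis
  proof (intro conjI impI)
    assume "\<not> 4 dvd n"
    then have "\<bar>det (walk_mat_hat n)\<bar> = 2 ^ (n div 2 - 1)"
      using abs_det_walk_mat_hat[OF assms] four_dvd by (simp add: mid_residue_def)
    then show "det (walk_mat_hat n) = 2 ^ (n div 2 - 1) \<or> det (walk_mat_hat n) = - (2 ^ (n div 2 - 1))"
      by linarith
  next
    assume "4 dvd n"
    then show "vec_space.rank (n - 1) (walk_mat_hat n) = n - 2"
      using rank_folded_walk_mat[OF n(2)] four_dvd walk_mat_hat_eq_folded_walk_mat[OF assms] by simp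
  qed
qed

end
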